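(* Let $\mathcal{G}$ be a directed graph with finite vertex set $\mathcal{V}_\mathcal{G}$ (totally ordered), edge set $\mathcal{E}_\mathcal{G}$, no self-loops, and nonnegative adjacency matrix $\mathbf{A}$ (with $A_{uv}>0$ iff $(u,v)\in\mathcal{E}_\mathcal{G}$), and let $\tilde{\mathbf{g}}\in\mathbb{R}^{|\mathcal{V}_\mathcal{G}|}$. Let $\tilde{\mathcal{E}}_\mathcal{G}=\{(u,v):(u,v)\in\mathcal{E}_\mathcal{G}\text{ or }(v,u)\in\mathcal{E}_\mathcal{G}\}$ and $m=|\tilde{\mathcal{E}}_\mathcal{G}|/2$. Let $\boldsymbol{\alpha}\in[0,1]^m$ collect the variables $\alpha_{uv}$ for $(u,v)\in\tilde{\mathcal{E}}_\mathcal{G}$ with $u<v$, and set $\alpha_{vu}:=1-\alpha_{uv}$. Define $f_A:\mathbb{R}^m\to\mathbb{R}^{|\mathcal{V}_\mathcal{G}|}$ by $[f_A(\boldsymbol{\alpha})]_u=\sum_{v:(u,v)\in\tilde{\mathcal{E}}_\mathcal{G}}(A_{uv}\alpha_{uv}-A_{vu}\alpha_{vu})$ and $\Psi(\boldsymbol{\alpha})=\|f_A(\boldsymbol{\alpha})-\tilde{\mathbf{g}}\|_2^2$. Then: (a) $\min_{\|\mathbf{y}\|_2\le1}\big(Q_1^{(g)}(\mathbf{y})-\langle\mathbf{y},\tilde{\mathbf{g}}\rangle\big)=-\min_{\boldsymbol{\alpha}\in[0,1]^m}\|f_A(\boldsymbol{\alpha})-\tilde{\mathbf{g}}\|_2$,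 so that the dual problem is $\min_{\boldsymbol{\alpha}\in[0,1]^m}\Psi(\boldsymbol{\alpha})$; (b) if $\boldsymbol{\alpha}^*$ minimizes $\Psi$ over $[0,1]^m$ and $f_A(\boldsymbol{\alpha}^* )\neq\tilde{\mathbf{g}}$, then $\mathbf{y}^*=-\frac{f_A(\boldsymbol{\alpha}^* )-\tilde{\mathbf{g}}}{\|f_A(\boldsymbol{\alpha}^* )-\tilde{\mathbf{g}}\|_2}$ minimizes $Q_1^{(g)}(\mathbf{y})-\langle\mathbf{y},\tilde{\mathbf{g}}\rangle$ over $\|\mathbf{y}\|_2\le1$; (c) for all $\boldsymbol{\alpha},\boldsymbol{\beta}\in\mathbb{R}^m$, $\|\nabla\Psi(\boldsymbol{\alpha})-\nabla\Psi(\boldsymbol{\beta})\|_2\le L\|\boldsymbol{\alpha}-\boldsymbol{\beta}\|_2$ with $L=4\max_{u\in\mathcal{V}_\mathcal{G}}\sum_{v\in\mathcal{V}_\mathcal{G}}(A_{uv}+A_{vu})^2$.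
   Context: $Q_1^{(g)}(\mathbf{y})=\sum_{u,v\in\mathcal{V}_\mathcal{G}}A_{uv}\max\{y_u-y_v,0\}$ is the Lovász extension of the directed cut function $\mathrm{cut}_\mathcal{G}(\mathcal{S})=\sum_{u\in\mathcal{S},v\notin\mathcal{S}}A_{uv}$. The set $\tilde{\mathcal{E}}_\mathcal{G}$ consists of ordered pairs, so $(u,v)$ and $(v,u)$ are distinct elements. *)

theory Defs
  imports "HOL-Analysis.Analysis"
begin

definition Etil :: "('v \<times> 'v) set \<Rightarrow> ('v \<times> 'v) set" where
  "Etil E = {(u, v). (u, v) \<in> E \<or> (v, u) \<in> E}"

definition Pidx :: "('v::{linorder,finite} \<times> 'v) set \<Rightarrow> ('v \<times> 'v) set" where
  "Pidx E = {(u, v). (u, v) \<in> Etil E \<and> u < v}"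

(* R^m is represented as the vectors in real^('v*'v) supported on Pidx E *)
definition Rm :: "('v::{linorder,finite} \<times> 'v) set \<Rightarrow> ((real, 'v \<times> 'v) vec) set" where
  "Rm E = {a. \<forall>i. i \<notin> Pidx E \<longrightarrow> a $ i = 0}"

definition box01 :: "('v::{linorder,finite} \<times> 'v) set \<Rightarrow> ((real, 'v \<times> 'v) vec) set" where
  "box01 E = {a \<in> Rm E. \<forall>i \<in> Pidx E. 0 \<le> a $ i \<and> a $ i \<le> 1}"

definition alph :: "((real, 'v::{linorder,finite} \<times> 'v) vec) \<Rightarrow> 'v \<Rightarrow> 'v \<Rightarrow> real" where
  "alph a u v = (if u < v then a $ (u, v) else 1 - a $ (v, u))"

definition fA :: "('v::{linorder,finite} \<Rightarrow> 'v \<Rightarrow> real) \<Rightarrow> ('v \<times> 'v) set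
                  \<Rightarrow> (real, 'v \<times> 'v) vec \<Rightarrow> (real, 'v) vec" where
  "fA A E a = (\<chi> u. \<Sum>v \<in> {v. (u, v) \<in> Etil E}. A u v * alph a u v - A v u * alph a v u)"

definition Psi :: "('v::{linorder,finite} \<Rightarrow> 'v \<Rightarrow> real) \<Rightarrow> ('v \<times> 'v) set
                  \<Rightarrow> (real, 'v) vec \<Rightarrow> (real, 'v \<times> 'v) vec \<Rightarrow> real" where
  "Psi A E g a = (norm (fA A E a - g))\<^sup>2"

(* Lovasz extension of the directed cut function *)
definition Q1 :: "('v::{linorder,finite} \<Rightarrow> 'v \<Rightarrow> real) \<Rightarrow> (real, 'v) vec \<Rightarrow> real" where
  "Q1 A y = (\<Sum>u\<in>UNIV. \<Sum>v\<in>UNIV. A u v * max (y $ u - y $ v) 0)"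

end

theory Submission
  imports Defs
begin

text \<open>
  Reindexing over the symmetrised edges gives \<open>\<langle>y, f\<^sub>A(\<alpha>)\<rangle> = \<Sum> A\<^sub>u\<^sub>v \<alpha>\<^sub>u\<^sub>v (y\<^sub>u - y\<^sub>v)\<close>,
  which for \<open>\<alpha> \<in> [0,1]\<^sup>m\<close> is at most \<open>Q\<^sub>1(y)\<close>, with equality when every edge is
  oriented towards the smaller value of \<open>y\<close>. So \<open>Q\<^sub>1\<close> is the support function of the
  compact convex set \<open>K = f\<^sub>A([0,1]\<^sup>m)\<close>, and for \<open>\<parallel>y\<parallel> \<le> 1\<close>, \<open>x \<in> K\<close> Cauchy-Schwarz gives
  \<open>Q\<^sub>1(y) - \<langle>y, g\<rangle> \<ge> \<langle>y, x - g\<rangle> \<ge> -\<parallel>x - g\<parallel>\<close>. At the point \<open>x\<^sub>0\<close> of \<open>K\<close> nearest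
  to \<open>g\<close>, the obtuse-angle characterisation of the projection onto \<open>K\<close> shows that
  \<open>y\<^sub>0 = -(x\<^sub>0 - g)/\<parallel>x\<^sub>0 - g\<parallel>\<close> attains this bound, which gives (a) and (b).

  For (c), \<open>f\<^sub>A\<close> is affine with linear part \<open>L\<close>, so \<open>\<nabla>\<Psi>(\<alpha>) = 2L\<^sup>T(f\<^sub>A(\<alpha>) - g)\<close> is
  Lipschitz with constant \<open>2\<parallel>L\<parallel>\<^sup>2\<close>, and Cauchy-Schwarz on the rows of \<open>L\<close> bounds \<open>\<parallel>L\<parallel>\<^sup>2\<close>
  by \<open>2 max\<^sub>u \<Sum>\<^sub>v (A\<^sub>u\<^sub>v + A\<^sub>v\<^sub>u)\<^sup>2\<close>.
\<close>

lemma gradient_norm_affine_square_lipschitz: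
  fixes L :: "'a::real_inner \<Rightarrow> 'b::real_inner"
  assumes L: "bounded_linear L" and bound: "\<And>x. norm (L x) \<le> K * norm x"
    and da: "((\<lambda>x. (norm (L x + c))\<^sup>2) has_derivative (\<lambda>h. inner ga h)) (at a)"
    and db: "((\<lambda>x. (norm (L x + c))\<^sup>2) has_derivative (\<lambda>h. inner gb h)) (at b)"
  shows "norm (ga - gb) \<le> 2 * K\<^sup>2 * norm (a - b)"
proof -
  interpret L: bounded_linear L by (fact L)
  have deriv: "((\<lambda>x. (norm (L x + c))\<^sup>2) has_derivative (\<lambda>h. 2 * inner (L z + c) (L h))) (at z)"
    for z
  proof -
    have "((\<lambda>x. L x + c) has_derivative L) (at z)"
      by (intro has_derivative_add_const bounded_linear_imp_has_derivative L)
    from has_derivative_inner[OF this this] show ?thesis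
      by (simp add: power2_norm_eq_inner inner_commute)
  qed
  have grad: "inner ga h = 2 * inner (L a + c) (L h)" "inner gb h = 2 * inner (L b + c) (L h)"
    for h
    using has_derivative_unique[OF da deriv] has_derivative_unique[OF db deriv] by meson+
  define k where "k = ga - gb"
  have "(norm k)\<^sup>2 = 2 * inner (L (a - b)) (L k)"
    by (simp add: power2_norm_eq_inner k_def inner_diff_left grad L.diff algebra_simps)
  also have "\<dots> \<le> 2 * (norm (L (a - b)) * norm (L k))"
    using norm_cauchy_schwarz by simp
  also have "\<dots> \<le> 2 * ((K * norm (a - b)) * (K * norm k))"
    using bound[of "a - b"] bound[of k]
    by (intro mult_left_mono mult_mono) (auto intro: order_trans[OF norm_ge_zero])
  finally have "norm k * norm k \<le> (2 * K\<^sup>2 * norm (a - b)) * norm k"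
    by (simp add: power2_eq_square algebra_simps)
  then show ?thesis
    by (cases "k = 0") (auto simp: k_def zero_le_mult_iff)
qed

lemma Etil_swap_iff: "(v, u) \<in> Etil E \<longleftrightarrow> (u, v) \<in> Etil E"
  by (auto simp: Etil_def)

lemma sum_neighbours_Etil:
  fixes E :: "('v::finite \<times> 'v) set"
  shows "(\<Sum>u\<in>UNIV. \<Sum>v\<in>{v. (u, v) \<in> Etil E}. F u v) = (\<Sum>(u, v)\<in>Etil E. F u v)"
proof -
  have "Sigma UNIV (\<lambda>u. {v. (u, v) \<in> Etil E}) = Etil E"
    by auto
  then show ?thesis
    by (simp add: sum.Sigma)
qed

lemma sum_Etil_swap:
  fixes E :: "('v::finite \<times> 'v) set"
  shows "(\<Sum>(u, v)\<in>Etil E. F u v) = (\<Sum>(u, v)\<in>Etil E. F v u)"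
  by (rule sum.reindex_bij_witness[where i = prod.swap and j = prod.swap]) (auto simp: Etil_def)

lemma inner_fA_eq_sum_Etil:
  "inner y (fA A E a) = (\<Sum>(u, v)\<in>Etil E. A u v * alph a u v * (y $ u - y $ v))"
proof -
  have "inner y (fA A E a)
      = (\<Sum>(u, v)\<in>Etil E. y $ u * (A u v * alph a u v)) - (\<Sum>(u, v)\<in>Etil E. y $ u * (A v u * alph a v u))"
    by (simp add: fA_def inner_vec_def sum_distrib_left right_diff_distrib sum_subtractf
        sum_neighbours_Etil case_prod_unfold)
  also have "(\<Sum>(u, v)\<in>Etil E. y $ u * (A v u * alph a v u)) = (\<Sum>(u, v)\<in>Etil E. y $ v * (A u v * alph a u v))"
    by (rule sum_Etil_swap)
  finally show ?thesis
    by (simp add: sum_subtractf[symmetric] case_prod_unfold algebra_simps)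
qed

lemma alph_in_unit_interval:
  assumes "a \<in> box01 E"
  shows "0 \<le> alph a u v \<and> alph a u v \<le> 1"
  using assms by (auto simp: box01_def Rm_def alph_def)

lemma box01_eq_cbox: "box01 E = cbox 0 (\<chi> i. if i \<in> Pidx E then 1 else 0)"
  by (auto simp: box01_def Rm_def mem_box_cart split: if_splits; blast)

lemma compact_box01: "compact (box01 E)"
  by (simp add: box01_eq_cbox)

lemma convex_box01: "convex (box01 E)"
  by (simp add: box01_eq_cbox)

definition skew :: "(real, 'v::{linorder,finite} \<times> 'v) vec \<Rightarrow> 'v \<Rightarrow> 'v \<Rightarrow> real" where
  "skew h u v = (if u < v then h $ (u, v) else - h $ (v, u))"

lemma skew_add [simp]: "skew (x + y) u v = skew x u v + skew y u v"
  by (simp add: skew_def)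

lemma skew_scaleR [simp]: "skew (c *\<^sub>R x) u v = c * skew x u v"
  by (simp add: skew_def)

definition fA_lin :: "('v::{linorder,finite} \<Rightarrow> 'v \<Rightarrow> real) \<Rightarrow> ('v \<times> 'v) set
                  \<Rightarrow> (real, 'v \<times> 'v) vec \<Rightarrow> (real, 'v) vec" where
  "fA_lin A E h = (\<chi> u. \<Sum>v \<in> {v. (u, v) \<in> Etil E}. (A u v + A v u) * skew h u v)"

lemma linear_fA_lin: "linear (fA_lin A E)"
  by (rule linearI)
    (simp_all add: vec_eq_iff fA_lin_def distrib_left sum.distrib sum_distrib_left algebra_simps)

lemma bounded_linear_fA_lin: "bounded_linear (fA_lin A E)"
  using linear_fA_lin linear_conv_bounded_linear by blast

lemma sum_Etil_skew_square_le: "(\<Sum>(u, v)\<in>Etil E. (skew h u v)\<^sup>2) \<le> 2 * (norm h)\<^sup>2"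
proof -
  have swap: "(\<Sum>p\<in>UNIV. (h $ (snd p, fst p))\<^sup>2) = (\<Sum>p\<in>UNIV. (h $ p)\<^sup>2)"
    by (rule sum.reindex_bij_witness[where i = prod.swap and j = prod.swap]) auto
  have "(\<Sum>(u, v)\<in>Etil E. (skew h u v)\<^sup>2) \<le> (\<Sum>(u, v)\<in>Etil E. (h $ (u, v))\<^sup>2 + (h $ (v, u))\<^sup>2)"
    by (rule sum_mono) (auto simp: skew_def)
  also have "\<dots> \<le> (\<Sum>(u, v)\<in>UNIV. (h $ (u, v))\<^sup>2 + (h $ (v, u))\<^sup>2)"
    by (rule sum_mono2) auto
  also have "\<dots> = 2 * (\<Sum>p\<in>UNIV. (h $ p)\<^sup>2)"
    using swap by (simp add: sum.distrib case_prod_unfold)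
  also have "\<dots> = 2 * (norm h)\<^sup>2"
    unfolding power2_norm_eq_inner by (simp add: inner_vec_def power2_eq_square)
  finally show ?thesis .
qed

lemma max_row_sum_square_nonneg:
  fixes A :: "'v::finite \<Rightarrow> 'v \<Rightarrow> real"
  shows "0 \<le> (MAX u\<in>UNIV. \<Sum>v\<in>UNIV. (A u v + A v u)\<^sup>2)"
proof -
  have "0 \<le> (\<Sum>v\<in>UNIV. (A u v + A v u)\<^sup>2)" for u
    by (simp add: sum_nonneg)
  also have "(\<Sum>v\<in>UNIV. (A u v + A v u)\<^sup>2) \<le> (MAX u\<in>UNIV. \<Sum>v\<in>UNIV. (A u v + A v u)\<^sup>2)" for u
    by (rule Max_ge) auto
  finally show ?thesis .
qed

lemma norm_fA_lin_square_le:
  "(norm (fA_lin A E h))\<^sup>2 \<le> 2 * (MAX u\<in>UNIV. \<Sum>v\<in>UNIV. (A u v + A v u)\<^sup>2) * (norm h)\<^sup>2"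
proof -
  define D where "D = (MAX u\<in>UNIV. \<Sum>v\<in>UNIV. (A u v + A v u)\<^sup>2)"
  define N where "N u = {v. (u, v) \<in> Etil E}" for u
  have row: "(\<Sum>v\<in>N u. (A u v + A v u)\<^sup>2) \<le> D" for u
  proof -
    have "(\<Sum>v\<in>N u. (A u v + A v u)\<^sup>2) \<le> (\<Sum>v\<in>UNIV. (A u v + A v u)\<^sup>2)"
      by (rule sum_mono2) auto
    also have "\<dots> \<le> D"
      unfolding D_def by (rule Max_ge) auto
    finally show ?thesis .
  qed
  have "(norm (fA_lin A E h))\<^sup>2 = (\<Sum>u\<in>UNIV. (\<Sum>v\<in>N u. (A u v + A v u) * skew h u v)\<^sup>2)"
    unfolding power2_norm_eq_inner by (simp add: inner_vec_def fA_lin_def N_def power2_eq_square)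
  also have "\<dots> \<le> (\<Sum>u\<in>UNIV. D * (\<Sum>v\<in>N u. (skew h u v)\<^sup>2))"
  proof (rule sum_mono)
    fix u
    have "(\<Sum>v\<in>N u. (A u v + A v u) * skew h u v)\<^sup>2
        \<le> (\<Sum>v\<in>N u. (A u v + A v u)\<^sup>2) * (\<Sum>v\<in>N u. (skew h u v)\<^sup>2)"
      by (rule Cauchy_Schwarz_ineq_sum)
    also have "\<dots> \<le> D * (\<Sum>v\<in>N u. (skew h u v)\<^sup>2)"
      using row by (intro mult_right_mono sum_nonneg) auto
    finally show "(\<Sum>v\<in>N u. (A u v + A v u) * skew h u v)\<^sup>2 \<le> D * (\<Sum>v\<in>N u. (skew h u v)\<^sup>2)" .
  qed
  also have "\<dots> = D * (\<Sum>(u, v)\<in>Etil E. (skew h u v)\<^sup>2)"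
    by (simp add: sum_distrib_left[symmetric] N_def sum_neighbours_Etil)
  also have "\<dots> \<le> D * (2 * (norm h)\<^sup>2)"
    unfolding D_def by (intro mult_left_mono sum_Etil_skew_square_le max_row_sum_square_nonneg)
  finally show ?thesis
    by (simp add: D_def algebra_simps)
qed

lemma norm_fA_lin_le:
  "norm (fA_lin A E h) \<le> sqrt (2 * (MAX u\<in>UNIV. \<Sum>v\<in>UNIV. (A u v + A v u)\<^sup>2)) * norm h"
  using real_le_rsqrt[OF norm_fA_lin_square_le] by (simp add: real_sqrt_mult)


lemma Psi_le_Psi_iff: "Psi A E g a \<le> Psi A E g b \<longleftrightarrow> norm (fA A E a - g) \<le> norm (fA A E b - g)"
  by (simp add: Psi_def)

locale weighted_digraph =
  fixes A :: "'v::{linorder,finite} \<Rightarrow> 'v \<Rightarrow> real" and E :: "('v \<times> 'v) set"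
  assumes weight_nonneg: "0 \<le> A u v"
    and weight_zero_off_edges: "(u, v) \<notin> E \<Longrightarrow> A u v = 0"
    and loop_free: "(u, u) \<notin> E"
begin

lemma Etil_irrefl: "(u, v) \<in> Etil E \<Longrightarrow> u \<noteq> v"
  using loop_free by (auto simp: Etil_def)

lemma weight_zero_off_Etil: "(u, v) \<notin> Etil E \<Longrightarrow> A u v = 0"
  by (simp add: Etil_def weight_zero_off_edges)

lemma Q1_eq_sum_Etil: "Q1 A y = (\<Sum>(u, v)\<in>Etil E. A u v * max (y $ u - y $ v) 0)"
  unfolding Q1_def sum.cartesian_product
  by (rule sum.mono_neutral_right) (auto simp: weight_zero_off_Etil)

lemma inner_fA_le_Q1:
  assumes "a \<in> box01 E"
  shows "inner y (fA A E a) \<le> Q1 A y"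
  unfolding inner_fA_eq_sum_Etil Q1_eq_sum_Etil
proof (rule sum_mono, clarify)
  fix u v
  assume uv: "(u, v) \<in> Etil E"
  then have "0 \<le> alph a u v \<and> alph a u v \<le> 1"
    using alph_in_unit_interval[OF assms] by blast
  then have "alph a u v * (y $ u - y $ v) \<le> max (y $ u - y $ v) 0"
    by (cases "0 \<le> y $ u - y $ v") (auto simp: mult_left_le_one_le mult_nonneg_nonpos)
  then show "A u v * alph a u v * (y $ u - y $ v) \<le> A u v * max (y $ u - y $ v) 0"
    by (simp add: mult.assoc mult_left_mono weight_nonneg)
qed

lemma Q1_attained: "\<exists>a\<in>box01 E. inner y (fA A E a) = Q1 A y"
proof
  define a :: "(real, 'v \<times> 'v) vec" where
    "a = (\<chi> p. if p \<in> Pidx E \<and> y $ snd p \<le> y $ fst p then 1 else 0)"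
  show "a \<in> box01 E"
    by (simp add: a_def box01_def Rm_def)
  have "alph a u v * (y $ u - y $ v) = max (y $ u - y $ v) 0" if "(u, v) \<in> Etil E" for u v
    using that Etil_irrefl[OF that] by (auto simp: a_def alph_def Pidx_def Etil_swap_iff neq_iff)
  then show "inner y (fA A E a) = Q1 A y"
    unfolding inner_fA_eq_sum_Etil Q1_eq_sum_Etil by (auto simp: mult.assoc intro!: sum.cong)
qed

lemma fA_eq_fA_lin_add: "fA A E a = fA_lin A E a + fA A E 0"
proof -
  have "(\<Sum>v\<in>{v. (u, v) \<in> Etil E}. A u v * alph a u v - A v u * alph a v u)
      = (\<Sum>v\<in>{v. (u, v) \<in> Etil E}.
           (A u v + A v u) * skew a u v + (A u v * alph 0 u v - A v u * alph 0 v u))" for u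
    by (rule sum.cong) (auto dest: Etil_irrefl simp: alph_def skew_def algebra_simps)
  then show ?thesis
    by (simp add: vec_eq_iff fA_def fA_lin_def sum.distrib)
qed

lemma fA_affine: "fA A E = (\<lambda>a. fA_lin A E a + fA A E 0)"
  by (rule ext) (rule fA_eq_fA_lin_add)

lemma continuous_on_fA: "continuous_on S (fA A E)"
  by (subst fA_affine)
    (intro continuous_on_add linear_continuous_on[OF bounded_linear_fA_lin] continuous_on_const)

lemma convex_fA_box01: "convex (fA A E ` box01 E)"
proof -
  have "fA A E ` box01 E = (+) (fA A E 0) ` fA_lin A E ` box01 E"
    by (subst fA_affine) (simp only: image_image add.commute)
  then show ?thesis
    by (simp add: convex_translation convex_linear_image linear_fA_lin convex_box01)
qed

lemma compact_fA_box01: "compact (fA A E ` box01 E)"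
  by (rule compact_continuous_image[OF continuous_on_fA compact_box01])

lemma residual_attains_min: "\<exists>a\<^sub>0\<in>box01 E. \<forall>a\<in>box01 E. norm (fA A E a\<^sub>0 - g) \<le> norm (fA A E a - g)"
proof (rule continuous_attains_inf[OF compact_box01])
  have "0 \<in> box01 E"
    by (simp add: box01_def Rm_def)
  then show "box01 E \<noteq> {}"
    by blast
  show "continuous_on (box01 E) (\<lambda>a. norm (fA A E a - g))"
    by (intro continuous_intros continuous_on_fA)
qed

lemma dual_objective_lower_bound:
  assumes "a \<in> box01 E" "y \<in> cball 0 1"
  shows "- norm (fA A E a - g) \<le> Q1 A y - inner y g"
proof -
  have "- norm (fA A E a - g) \<le> - (norm y * norm (fA A E a - g))"
    using assms(2) by (simp add: mult_left_le_one_le)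
  also have "\<dots> \<le> inner y (fA A E a - g)"
    using norm_cauchy_schwarz[of "- y" "fA A E a - g"] by simp
  also have "\<dots> \<le> Q1 A y - inner y g"
    using inner_fA_le_Q1[OF assms(1)] by (simp add: inner_diff_right)
  finally show ?thesis .
qed

text \<open>This also holds when \<open>fA A E a\<^sub>0 = g\<close>: then \<open>y\<^sub>0 = 0\<close>, as \<open>1 / 0 = 0\<close>.\<close>

lemma dual_objective_normalized_residual_le:
  assumes a0: "a\<^sub>0 \<in> box01 E" and min: "\<forall>a\<in>box01 E. norm (fA A E a\<^sub>0 - g) \<le> norm (fA A E a - g)"
  defines "y\<^sub>0 \<equiv> - ((1 / norm (fA A E a\<^sub>0 - g)) *\<^sub>R (fA A E a\<^sub>0 - g))"
  shows "Q1 A y\<^sub>0 - inner y\<^sub>0 g \<le> - norm (fA A E a\<^sub>0 - g)"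
proof (cases "fA A E a\<^sub>0 = g")
  case True
  then show ?thesis
    by (simp add: y\<^sub>0_def Q1_def)
next
  case False
  define r where "r = fA A E a\<^sub>0 - g"
  have r: "0 < norm r"
    using False by (simp add: r_def)
  obtain a\<^sub>1 where a1: "a\<^sub>1 \<in> box01 E" "inner y\<^sub>0 (fA A E a\<^sub>1) = Q1 A y\<^sub>0"
    using Q1_attained by blast
  have "inner (g - fA A E a\<^sub>0) (fA A E a\<^sub>1 - fA A E a\<^sub>0) \<le> 0"
    using a0 a1(1) min
    by (intro any_closest_point_dot[OF convex_fA_box01 compact_imp_closed[OF compact_fA_box01]])
      (auto simp: dist_norm norm_minus_commute)
  then have "(norm r)\<^sup>2 \<le> inner r (fA A E a\<^sub>1 - g)"
    by (simp add: r_def power2_norm_eq_inner inner_diff_left inner_diff_right inner_commute)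
  have "Q1 A y\<^sub>0 - inner y\<^sub>0 g = inner y\<^sub>0 (fA A E a\<^sub>1 - g)"
    using a1(2) by (simp add: inner_diff_right)
  also have "\<dots> = - (inner r (fA A E a\<^sub>1 - g) / norm r)"
    by (simp add: y\<^sub>0_def r_def)
  also have "\<dots> \<le> - ((norm r)\<^sup>2 / norm r)"
    using \<open>(norm r)\<^sup>2 \<le> _\<close> r by (simp add: divide_right_mono)
  also have "\<dots> = - norm r"
    using r by (simp add: power2_eq_square)
  finally show ?thesis
    by (simp add: r_def)
qed

lemma normalized_residual_minimizes_dual_objective:
  assumes a0: "a\<^sub>0 \<in> box01 E" and min: "\<forall>a\<in>box01 E. norm (fA A E a\<^sub>0 - g) \<le> norm (fA A E a - g)"
  defines "y\<^sub>0 \<equiv> - ((1 / norm (fA A E a\<^sub>0 - g)) *\<^sub>R (fA A E a\<^sub>0 - g))"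
  shows "y\<^sub>0 \<in> cball 0 1"
    and "Q1 A y\<^sub>0 - inner y\<^sub>0 g = - norm (fA A E a\<^sub>0 - g)"
    and "\<forall>y\<in>cball 0 1. Q1 A y\<^sub>0 - inner y\<^sub>0 g \<le> Q1 A y - inner y g"
proof -
  show y0: "y\<^sub>0 \<in> cball 0 1"
    by (cases "fA A E a\<^sub>0 = g") (simp_all add: y\<^sub>0_def)
  show "Q1 A y\<^sub>0 - inner y\<^sub>0 g = - norm (fA A E a\<^sub>0 - g)"
    using dual_objective_normalized_residual_le[OF a0 min] dual_objective_lower_bound[OF a0 y0, where g = g]
    unfolding y\<^sub>0_def by linarith
  then show "\<forall>y\<in>cball 0 1. Q1 A y\<^sub>0 - inner y\<^sub>0 g \<le> Q1 A y - inner y g"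
    using dual_objective_lower_bound[OF a0] by simp
qed

lemma Psi_eq_norm_fA_lin: "Psi A E g = (\<lambda>a. (norm (fA_lin A E a + (fA A E 0 - g)))\<^sup>2)"
proof
  fix a
  show "Psi A E g a = (norm (fA_lin A E a + (fA A E 0 - g)))\<^sup>2"
    using fA_eq_fA_lin_add[of a] by (simp add: Psi_def algebra_simps)
qed

lemma INF_dual_objective_eq:
  assumes a0: "a\<^sub>0 \<in> box01 E" and min: "\<forall>a\<in>box01 E. norm (fA A E a\<^sub>0 - g) \<le> norm (fA A E a - g)"
  shows "(INF y\<in>cball 0 1. Q1 A y - inner y g) = - norm (fA A E a\<^sub>0 - g)"
proof (rule cInf_eq_minimum)
  note dual = normalized_residual_minimizes_dual_objective[OF a0 min]
  show "- norm (fA A E a\<^sub>0 - g) \<in> (\<lambda>y. Q1 A y - inner y g) ` cball 0 1"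
    using dual(2)[symmetric] dual(1) by (rule image_eqI)
  show "- norm (fA A E a\<^sub>0 - g) \<le> z" if "z \<in> (\<lambda>y. Q1 A y - inner y g) ` cball 0 1" for z
    using that dual_objective_lower_bound[OF a0] by blast
qed

lemma gradient_Psi_lipschitz:
  assumes "(Psi A E g has_derivative (\<lambda>h. inner ga h)) (at a)"
    and "(Psi A E g has_derivative (\<lambda>h. inner gb h)) (at b)"
  shows "norm (ga - gb) \<le> 4 * (MAX u\<in>UNIV. \<Sum>v\<in>UNIV. (A u v + A v u)\<^sup>2) * norm (a - b)"
proof -
  have "norm (ga - gb) \<le> 2 * (sqrt (2 * (MAX u\<in>UNIV. \<Sum>v\<in>UNIV. (A u v + A v u)\<^sup>2)))\<^sup>2 * norm (a - b)"
    using assms unfolding Psi_eq_norm_fA_lin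
    by (rule gradient_norm_affine_square_lipschitz[OF bounded_linear_fA_lin norm_fA_lin_le])
  then show ?thesis
    using max_row_sum_square_nonneg[of A] by simp
qed

end

theorem theorem3:
  fixes A :: "'v::{linorder,finite} \<Rightarrow> 'v \<Rightarrow> real"
    and E :: "('v \<times> 'v) set"
    and g :: "(real, 'v) vec"
  assumes A_nonneg: "\<forall>u v. 0 \<le> A u v"
    and A_edge: "\<forall>u v. 0 < A u v \<longleftrightarrow> (u, v) \<in> E"
    and no_loops: "\<forall>u. (u, u) \<notin> E"
  shows
    \<comment> \<open>(a): both minima are attained, and they are related as stated\<close>
    "((\<exists>y\<in>cball 0 1. Q1 A y - inner y g = (INF z\<in>cball 0 1. Q1 A z - inner z g))
      \<and> (\<exists>a\<in>box01 E. norm (fA A E a - g) = (INF b\<in>box01 E. norm (fA A E b - g)))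
      \<and> (INF y\<in>cball 0 1. Q1 A y - inner y g) = - (INF a\<in>box01 E. norm (fA A E a - g)))
   \<and>
    \<comment> \<open>(b)\<close>
    (\<forall>a\<^sub>0\<in>box01 E. (\<forall>a\<in>box01 E. Psi A E g a\<^sub>0 \<le> Psi A E g a) \<longrightarrow> fA A E a\<^sub>0 \<noteq> g \<longrightarrow>
       (let y\<^sub>0 = - ((1 / norm (fA A E a\<^sub>0 - g)) *\<^sub>R (fA A E a\<^sub>0 - g)) in
          y\<^sub>0 \<in> cball 0 1 \<and>
          (\<forall>y\<in>cball 0 1. Q1 A y\<^sub>0 - inner y\<^sub>0 g \<le> Q1 A y - inner y g)))
   \<and>
    \<comment> \<open>(c): Lipschitz continuity of the gradient of Psi on R^m\<close>
    (\<forall>a\<in>Rm E. \<forall>b\<in>Rm E. \<forall>ga gb.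
       (Psi A E g has_derivative (\<lambda>h. inner ga h)) (at a) \<longrightarrow>
       (Psi A E g has_derivative (\<lambda>h. inner gb h)) (at b) \<longrightarrow>
       norm (ga - gb) \<le> 4 * (MAX u\<in>UNIV. \<Sum>v\<in>UNIV. (A u v + A v u)\<^sup>2) * norm (a - b))"
proof -
  interpret weighted_digraph A E
    using A_nonneg A_edge no_loops by unfold_locales (auto simp: order.order_iff_strict)
  obtain a\<^sub>0 where a0: "a\<^sub>0 \<in> box01 E"
    and min: "\<forall>a\<in>box01 E. norm (fA A E a\<^sub>0 - g) \<le> norm (fA A E a - g)"
    using residual_attains_min by blast
  have inf_primal: "(INF a\<in>box01 E. norm (fA A E a - g)) = norm (fA A E a\<^sub>0 - g)"
    using a0 min by (intro cInf_eq_minimum) auto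
  have dual_attained: "\<exists>y\<in>cball 0 1. Q1 A y - inner y g = - norm (fA A E a\<^sub>0 - g)"
    using normalized_residual_minimizes_dual_objective(1,2)[OF a0 min] by blast
  show ?thesis
    unfolding Let_def Psi_le_Psi_iff INF_dual_objective_eq[OF a0 min] inf_primal
    using a0 dual_attained gradient_Psi_lipschitz normalized_residual_minimizes_dual_objective(1,3)
    by blast
qed

end
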